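(* Let $N\ge 1$ be an integer, let $c\neq 0$ be a constant, and let $c_i,d_i,p_i,q_i,\xi_{i0},\eta_{i0}$ ($i=1,\dots,N$) be arbitrary real or complex parameters. For integers $n,m$ define $$\phi_n^{(i)}(m)=c_ip_i^n(1-cp_i)^m e^{\xi_i}+d_iq_i^n(1-cq_i)^m e^{\eta_i},\qquad \xi_i=p_ix_1+p_i^{-1}x_{-1}+\xi_{i0},\quad \eta_i=q_ix_1+q_i^{-1}x_{-1}+\eta_{i0},$$ and the Casorati determinant $\tau_{n,m}(x_{-1},x_1)=\det\big(\phi^{(i)}_{n+j-1}(m)\big)_{1\le i,j\le N}$. Then for all integers $n,m$: $$\Big(\tfrac12 D_{x_{-1}}D_{x_1}-1\Big)\tau_{n,m}\cdot\tau_{n,m}=-\tau_{n+1,m}\tau_{n-1,m},$$ $$\big(c^{-1}D_{x_{-1}}-1\big)\tau_{n,m}\cdot\tau_{n,m+1}+\tau_{n+1,m}\tau_{n-1,m+1}=0,$$ $$\big(cD_{x_1}-1\big)\tau_{n+1,m}\cdot\tau_{n,m+1}+\tau_{n,m}\tau_{n+1,m+1}=0.$$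
   Context: Hirota bilinear operators: for functions $a,b$ of variables $x,y,\dots$, $D_x^{k}D_y^{l}\,a\cdot b=(\partial_x-\partial_{x'})^{k}(\partial_y-\partial_{y'})^{l}a(x,y)b(x',y')\big|_{x'=x,\,y'=y}$; a constant term "$-1$" acts as $-1\cdot a\cdot b=-ab$. *)

theory Defs
  imports "HOL-Analysis.Derivative" "Jordan_Normal_Form.Determinant"
begin

text \<open>Partial derivatives of a function of two complex variables (x_{-1}, x_1).\<close>
definition pd1 :: "(complex \<Rightarrow> complex \<Rightarrow> complex) \<Rightarrow> complex \<Rightarrow> complex \<Rightarrow> complex" where
  "pd1 f x y = deriv (\<lambda>s. f s y) x"

definition pd2 :: "(complex \<Rightarrow> complex \<Rightarrow> complex) \<Rightarrow> complex \<Rightarrow> complex \<Rightarrow> complex" where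
  "pd2 f x y = deriv (\<lambda>t. f x t) y"

definition hirota1 :: "(complex \<Rightarrow> complex \<Rightarrow> complex) \<Rightarrow> (complex \<Rightarrow> complex \<Rightarrow> complex) \<Rightarrow> complex \<Rightarrow> complex \<Rightarrow> complex" where
  "hirota1 a b x y = pd1 a x y * b x y - a x y * pd1 b x y"

definition hirota2 :: "(complex \<Rightarrow> complex \<Rightarrow> complex) \<Rightarrow> (complex \<Rightarrow> complex \<Rightarrow> complex) \<Rightarrow> complex \<Rightarrow> complex \<Rightarrow> complex" where
  "hirota2 a b x y = pd2 a x y * b x y - a x y * pd2 b x y"

definition hirota12 :: "(complex \<Rightarrow> complex \<Rightarrow> complex) \<Rightarrow> (complex \<Rightarrow> complex \<Rightarrow> complex) \<Rightarrow> complex \<Rightarrow> complex \<Rightarrow> complex" where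
  "hirota12 a b x y = pd1 (pd2 a) x y * b x y - pd1 a x y * pd2 b x y
                      - pd2 a x y * pd1 b x y + a x y * pd1 (pd2 b) x y"

text \<open>The entries phi^{(i)}_n(m) as functions of (x_{-1}, x_1); i is 0-based.\<close>
definition phi :: "complex \<Rightarrow> (nat \<Rightarrow> complex) \<Rightarrow> (nat \<Rightarrow> complex) \<Rightarrow> (nat \<Rightarrow> complex) \<Rightarrow> (nat \<Rightarrow> complex)
    \<Rightarrow> (nat \<Rightarrow> complex) \<Rightarrow> (nat \<Rightarrow> complex) \<Rightarrow> nat \<Rightarrow> int \<Rightarrow> int \<Rightarrow> complex \<Rightarrow> complex \<Rightarrow> complex" where
  "phi c cc dd p q xi0 eta0 i n m xm x =
     cc i * p i powi n * (1 - c * p i) powi m * exp (p i * x + inverse (p i) * xm + xi0 i)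
   + dd i * q i powi n * (1 - c * q i) powi m * exp (q i * x + inverse (q i) * xm + eta0 i)"

definition tau :: "nat \<Rightarrow> complex \<Rightarrow> (nat \<Rightarrow> complex) \<Rightarrow> (nat \<Rightarrow> complex) \<Rightarrow> (nat \<Rightarrow> complex) \<Rightarrow> (nat \<Rightarrow> complex)
    \<Rightarrow> (nat \<Rightarrow> complex) \<Rightarrow> (nat \<Rightarrow> complex) \<Rightarrow> int \<Rightarrow> int \<Rightarrow> complex \<Rightarrow> complex \<Rightarrow> complex" where
  "tau N c cc dd p q xi0 eta0 n m xm x =
     det (mat N N (\<lambda>(i, j). phi c cc dd p q xi0 eta0 i (n + int j) m xm x))"

end

theory Submission
  imports Defs
begin

text \<open>
  Writing \<open>a\<^sub>k(m)\<close> for the \<open>k\<close>-th Casorati column, only the linear dispersion relations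
  \<open>\<partial>a\<^sub>k/\<partial>x\<^sub>1 = a\<^sub>k\<^sub>+\<^sub>1\<close>, \<open>\<partial>a\<^sub>k/\<partial>x\<^sub>-\<^sub>1 = a\<^sub>k\<^sub>-\<^sub>1\<close> and \<open>a\<^sub>k(m) = a\<^sub>k(m+1) + c a\<^sub>k\<^sub>+\<^sub>1(m)\<close> are used.
  Consecutive columns of \<open>\<tau>\<close> are shifts of each other, so differentiating column by column kills all
  terms but one (two for the mixed derivative): only an end column moves.  The third relation, used as
  a column operation from left to right, turns the columns of \<open>\<tau>(m)\<close> into those of \<open>\<tau>(m+1)\<close> except
  the last one.  Afterwards all determinants in each bilinear equation share \<open>N - 2\<close> columns and the
  equation is the three-term Pluecker relation, which comes from a Laplace expansion of a matrix
  with a repeated row.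
\<close>

definition det_cols :: "(nat \<Rightarrow> 'a :: comm_ring_1) list \<Rightarrow> 'a" where
  "det_cols vs = det (mat (length vs) (length vs) (\<lambda>(i, j). (vs ! j) i))"

lemma det_cols_leibniz:
  "det_cols vs = (\<Sum>p | p permutes {0..<length vs}. signof p * (\<Prod>j<length vs. (vs ! j) (p j)))"
  unfolding det_cols_def
  by (subst det_col[of _ "length vs"]) (auto intro!: sum.cong prod.cong simp: permutes_in_image)

lemma det_cols_cong:
  assumes "length vs = length ws"
    and "\<And>j i. j < length vs \<Longrightarrow> i < length vs \<Longrightarrow> (vs ! j) i = (ws ! j) i"
  shows "det_cols vs = det_cols ws"
  unfolding det_cols_def using assms by (intro arg_cong[of _ _ det] eq_matI) auto

lemma det_cols_single: "det_cols [v] = v 0"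
  unfolding det_cols_def by (subst det_single) auto

lemma det_cols_eq_columns:
  assumes "j < length vs" "k < length vs" "j \<noteq> k" "vs ! j = vs ! k"
  shows "det_cols vs = 0"
  unfolding det_cols_def using assms
  by (intro det_identical_columns[of _ "length vs" j k]) (auto intro!: eq_vecI)

lemma det_cols_update_eq_nth:
  assumes "j < length vs" "k < length vs" "j \<noteq> k"
  shows "det_cols (vs[k := vs ! j]) = 0"
  using assms by (intro det_cols_eq_columns[of j _ k]) auto

lemma det_cols_repeated: "det_cols (P @ v # Q @ v # S) = 0"
  by (rule det_cols_eq_columns[of "length P" _ "length P + Suc (length Q)"]) (auto simp: nth_append)

lemma det_cols_linear_form:
  "\<exists>C. \<forall>w. det_cols (P @ w # S)
     = (\<Sum>p | p permutes {0..<Suc (length P + length S)}. C p * w (p (length P)))"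
proof -
  let ?n = "Suc (length P + length S)"
  let ?k = "length P"
  have "det_cols (P @ w # S) = (\<Sum>p | p permutes {0..<?n}.
          (signof p * (\<Prod>j\<in>{..<?n} - {?k}. ((P @ undefined # S) ! j) (p j))) * w (p ?k))" for w
  proof -
    have other: "(P @ w # S) ! j = (P @ undefined # S) ! j" if "j \<noteq> ?k" for j
      using that by (auto simp: nth_append nth_Cons')
    have "(\<Prod>j<?n. ((P @ w # S) ! j) (p j))
        = w (p ?k) * (\<Prod>j\<in>{..<?n} - {?k}. ((P @ undefined # S) ! j) (p j))" for p
      by (subst prod.remove[of _ ?k]) (auto simp: other intro!: prod.cong)
    then show ?thesis by (simp add: det_cols_leibniz ac_simps)
  qed
  then show ?thesis
    by (intro exI[of _ "\<lambda>p. signof p * (\<Prod>j\<in>{..<?n} - {?k}. ((P @ undefined # S) ! j) (p j))"]) simp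
qed

lemma det_cols_sum:
  assumes "finite T"
  shows "det_cols (P @ (\<lambda>i. \<Sum>l\<in>T. f l * g l i) # S) = (\<Sum>l\<in>T. f l * det_cols (P @ g l # S))"
proof -
  obtain C where C: "\<And>w. det_cols (P @ w # S)
      = (\<Sum>p | p permutes {0..<Suc (length P + length S)}. C p * w (p (length P)))"
    using det_cols_linear_form by blast
  show ?thesis
    unfolding C by (simp add: sum_distrib_left ac_simps sum.swap[of _ T])
qed

lemma det_cols_zero_column: "det_cols (P @ (\<lambda>i. 0) # S) = 0"
  using det_cols_sum[of "{}" P _ _ S] by simp

lemma det_cols_add:
  "det_cols (P @ (\<lambda>i. u i + b * v i) # S) = det_cols (P @ u # S) + b * det_cols (P @ v # S)"
  using det_cols_sum[of "{True, False}" P "\<lambda>l. if l then 1 else b" "\<lambda>l. if l then u else v" S] by simp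

lemma det_cols_swap: "det_cols (P @ u # v # S) = - det_cols (P @ v # u # S)"
proof -
  let ?w = "\<lambda>i. u i + 1 * v i"
  have "0 = det_cols (P @ ?w # ?w # S)"
    using det_cols_repeated[of P ?w "[]"] by simp
  also have "\<dots> = det_cols (P @ u # v # S) + det_cols (P @ v # u # S)"
    using det_cols_add[of P u 1 v] det_cols_add[of "P @ [u]" u 1 v S] det_cols_add[of "P @ [v]" u 1 v S]
      det_cols_repeated[of P u "[]" S] det_cols_repeated[of P v "[]" S] by simp
  finally show ?thesis by (simp add: eq_neg_iff_add_eq_0)
qed

lemma det_cols_move: "det_cols (P @ v # U @ S) = (-1) ^ length U * det_cols (P @ U @ v # S)"
proof (induction U arbitrary: P)
  case (Cons u U)
  have "det_cols (P @ v # (u # U) @ S) = - det_cols ((P @ [u]) @ v # U @ S)"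
    using det_cols_swap[of P v u] by simp
  also have "\<dots> = - ((-1) ^ length U * det_cols (P @ (u # U) @ v # S))"
    using Cons[of "P @ [u]"] by simp
  finally show ?case by simp
qed simp

text \<open>Expand along its first row the matrix whose first row duplicates row \<open>i\<close>.\<close>

lemma det_cols_minors_relation:
  assumes "length w = Suc n" "i < n"
  shows "(\<Sum>k<Suc n. (-1) ^ k * det_cols (take k w @ drop (Suc k) w) * (w ! k) i) = 0"
proof -
  define B where "B = mat (Suc n) (Suc n) (\<lambda>(r, k). if r = 0 then (w ! k) i else (w ! k) (r - 1))"
  have B: "B \<in> carrier_mat (Suc n) (Suc n)" unfolding B_def by simp
  have "det B = 0"
    using assms by (intro det_identical_rows[OF B, of 0 "Suc i"]) (auto simp: B_def intro!: eq_vecI)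
  moreover have "det B = (\<Sum>k<Suc n. B $$ (0, k) * cofactor B 0 k)"
    by (rule laplace_expansion_row[OF B]) simp
  moreover have "B $$ (0, k) * cofactor B 0 k = (-1) ^ k * det_cols (take k w @ drop (Suc k) w) * (w ! k) i"
    if k: "k < Suc n" for k
  proof -
    have "mat_delete B 0 k = mat n n (\<lambda>(r, j). ((take k w @ drop (Suc k) w) ! j) r)"
      using k assms by (intro eq_matI) (auto simp: mat_delete_def B_def nth_append min_def)
    then show ?thesis
      using k assms by (simp add: cofactor_def det_cols_def B_def)
  qed
  ultimately show ?thesis by simp
qed

lemma neg_one_power_mult_eq_0_iff: "(-1) ^ n * (x :: 'a :: comm_ring_1) = 0 \<longleftrightarrow> x = 0"
  by (simp add: minus_one_power_iff)

lemma det_cols_pluecker: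
  shows "det_cols (x # U @ [y1]) * det_cols (U @ [y2, y3]) - det_cols (x # U @ [y2]) * det_cols (U @ [y1, y3])
       + det_cols (x # U @ [y3]) * det_cols (U @ [y1, y2]) = 0"
proof -
  define K where "K = length U"
  define w where "w = U @ [y1, y2, y3]"
  have w: "length w = Suc (K + 2)" by (simp add: w_def K_def)
  define coeff where "coeff k = (-1) ^ k * det_cols (take k w @ drop (Suc k) w)" for k
  define Z where "Z = (\<lambda>i. \<Sum>k<Suc (K + 2). coeff k * (w ! k) i)"
  have "Z i = 0" if "i < K + 2" for i
    using det_cols_minors_relation[OF w that] by (simp add: Z_def coeff_def mult.assoc)
  then have "det_cols ((x # U) @ Z # []) = det_cols ((x # U) @ (\<lambda>i. 0) # [])"
    by (intro det_cols_cong) (auto simp: K_def nth_append nth_Cons')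
  then have "(\<Sum>k<Suc (K + 2). coeff k * det_cols (x # U @ [w ! k])) = 0"
    using det_cols_sum[of "{..<Suc (K + 2)}" "x # U" coeff "(!) w" "[]"] det_cols_zero_column[of "x # U" "[]"]
    by (simp add: Z_def del: sum.lessThan_Suc)
  moreover have "det_cols (x # U @ [w ! k]) = 0" if "k < K" for k
    using that by (intro det_cols_eq_columns[of "Suc k" _ "Suc K"]) (auto simp: K_def w_def nth_append)
  ultimately have "coeff K * det_cols (x # U @ [y1]) + coeff (Suc K) * det_cols (x # U @ [y2])
      + coeff (Suc (Suc K)) * det_cols (x # U @ [y3]) = 0"
    by (simp add: K_def w_def nth_append)
  moreover have "take K w @ drop (Suc K) w = U @ [y2, y3]" "take (Suc K) w @ drop (Suc (Suc K)) w = U @ [y1, y3]"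
    "take (Suc (Suc K)) w @ drop (Suc (Suc (Suc K))) w = U @ [y1, y2]"
    by (simp_all add: K_def w_def)
  ultimately have "(-1) ^ K * (det_cols (x # U @ [y1]) * det_cols (U @ [y2, y3])
      - det_cols (x # U @ [y2]) * det_cols (U @ [y1, y3]) + det_cols (x # U @ [y3]) * det_cols (U @ [y1, y2])) = 0"
    by (simp add: coeff_def algebra_simps)
  then show ?thesis by (simp only: neg_one_power_mult_eq_0_iff)
qed

lemma det_cols_jacobi:
  "det_cols (x1 # U @ [y1]) * det_cols (x2 # U @ [y2]) - det_cols (x1 # U @ [y2]) * det_cols (x2 # U @ [y1])
     = det_cols (x1 # x2 # U) * det_cols (U @ [y1, y2])"
proof -
  let ?s = "(-1) ^ length U :: 'a"
  have s: "?s * ?s = 1" by (simp flip: power_mult_distrib)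
  have move_x2: "det_cols (U @ [x2, y]) = ?s * det_cols (x2 # U @ [y])" for y
    using det_cols_move[of "[]" x2 U "[y]"] s by (simp add: mult.assoc[symmetric])
  have "det_cols (x1 # U @ [x2]) = ?s * det_cols (x1 # x2 # U)"
    using det_cols_move[of "[x1]" x2 U "[]"] by simp
  with det_cols_pluecker[of x1 U x2 y1 y2]
  have "?s * (det_cols (x1 # x2 # U) * det_cols (U @ [y1, y2]) - det_cols (x1 # U @ [y1]) * det_cols (x2 # U @ [y2])
      + det_cols (x1 # U @ [y2]) * det_cols (x2 # U @ [y1])) = 0" (is "?s * ?X = 0")
    by (simp add: move_x2 algebra_simps)
  then have "?X = 0"
    by (simp only: neg_one_power_mult_eq_0_iff)
  then show ?thesis by (simp add: algebra_simps)
qed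

lemma has_field_derivative_det_cols:
  fixes F :: "'a :: real_normed_field \<Rightarrow> nat \<Rightarrow> nat \<Rightarrow> 'a"
  assumes "\<And>j i. j < n \<Longrightarrow> i < n \<Longrightarrow> ((\<lambda>t. F t j i) has_field_derivative F' j i) (at z)"
  shows "((\<lambda>t. det_cols (map (F t) [0..<n])) has_field_derivative
           (\<Sum>k<n. det_cols ((map (F z) [0..<n])[k := F' k]))) (at z)"
proof -
  have "(\<Sum>k<n. det_cols ((map (F z) [0..<n])[k := F' k]))
      = (\<Sum>p | p permutes {0..<n}. signof p * (\<Sum>k<n. F' k (p k) * (\<Prod>j\<in>{..<n} - {k}. F z j (p j))))"
  proof -
    have "(\<Prod>j<n. ((map (F z) [0..<n])[k := F' k] ! j) (p j))
        = F' k (p k) * (\<Prod>j\<in>{..<n} - {k}. F z j (p j))"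
      if "k < n" for k p
      using that by (subst prod.remove[of _ k]) (auto intro!: prod.cong)
    then show ?thesis
      by (simp add: det_cols_leibniz sum_distrib_left sum.swap[of _ "{..<n}"])
  qed
  then show ?thesis
    unfolding det_cols_leibniz length_map length_upt diff_zero
    by (auto intro!: DERIV_sum DERIV_cmult has_field_derivative_prod assms simp: permutes_in_image)
qed

definition col_range :: "(int \<Rightarrow> 'b) \<Rightarrow> int \<Rightarrow> nat \<Rightarrow> 'b list" where
  "col_range A s k = map (\<lambda>j. A (s + int j)) [0..<k]"

lemma length_col_range [simp]: "length (col_range A s k) = k"
  by (simp add: col_range_def)

lemma nth_col_range [simp]: "j < k \<Longrightarrow> col_range A s k ! j = A (s + int j)"
  by (simp add: col_range_def)

lemma col_range_0 [simp]: "col_range A s 0 = []"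
  by (simp add: col_range_def)

lemma col_range_Suc_Cons: "col_range A s (Suc k) = A s # col_range A (s + 1) k"
  unfolding col_range_def by (simp only: map_upt_Suc) (simp add: algebra_simps)

lemma col_range_Suc_snoc: "col_range A s (Suc k) = col_range A s k @ [A (s + int k)]"
  by (simp add: col_range_def)

lemma col_range_Suc_Suc: "col_range A s (Suc (Suc k)) = A s # col_range A (s + 1) k @ [A (s + int k + 1)]"
  unfolding col_range_Suc_Cons[of A s] col_range_Suc_snoc[of A "s + 1"] by (simp add: algebra_simps)

lemma det_cols_shift_elimination:
  assumes "\<And>k. A k = (\<lambda>i. B k i + a * A (k + 1) i)"
  shows "det_cols (P @ col_range A s (Suc K) @ S) = det_cols (P @ col_range B s K @ A (s + int K) # S)"
proof (induction K arbitrary: P s)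
  case (Suc K)
  have "det_cols (P @ col_range A s (Suc (Suc K)) @ S) = det_cols (P @ B s # col_range A (s + 1) (Suc K) @ S)"
    using det_cols_add[of P "B s" a "A (s + 1)"] det_cols_repeated[of P "A (s + 1)" "[]"]
    by (simp add: col_range_Suc_Cons[of A s] col_range_Suc_Cons[of A "s + 1"] assms[of s, symmetric])
  also have "\<dots> = det_cols ((P @ [B s]) @ col_range B (s + 1) K @ A (s + 1 + int K) # S)"
    using Suc[of "P @ [B s]" "s + 1"] by simp
  finally show ?case
    by (simp add: col_range_Suc_Cons[of B] algebra_simps)
qed (simp add: col_range_Suc_Cons)

lemma hirota12_self:
  "hirota12 f f x y = 2 * (pd1 (pd2 f) x y * f x y - pd1 f x y * pd2 f x y)"
  by (simp add: hirota12_def algebra_simps)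

locale casorati_family =
  fixes N :: nat and c :: complex
    and a :: "int \<Rightarrow> int \<Rightarrow> complex \<Rightarrow> complex \<Rightarrow> nat \<Rightarrow> complex"
  assumes has_field_derivative_x: "((\<lambda>t. a m k xm t i) has_field_derivative a m (k + 1) xm x i) (at x)"
    and has_field_derivative_xm: "((\<lambda>s. a m k s x i) has_field_derivative a m (k - 1) xm x i) (at xm)"
    and shift: "a m k xm x i = a (m + 1) k xm x i + c * a m (k + 1) xm x i"
begin

definition casorati :: "int \<Rightarrow> int \<Rightarrow> complex \<Rightarrow> complex \<Rightarrow> complex" where
  "casorati n m xm x = det_cols (col_range (\<lambda>k. a m k xm x) n N)"

lemma shift_fun: "a m k xm x = (\<lambda>i. a (m + 1) k xm x i + c * a m (k + 1) xm x i)"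
  by (rule ext) (rule shift)

lemma det_cols_shift_column:
  "det_cols (P @ a m k xm x # S) = det_cols (P @ a (m + 1) k xm x # S) + c * det_cols (P @ a m (k + 1) xm x # S)"
  using det_cols_add[of P "a (m + 1) k xm x" c "a m (k + 1) xm x" S] by (simp flip: shift_fun)

lemma det_cols_eliminate_shifts:
  "det_cols (P @ col_range (\<lambda>k. a m k xm x) s (Suc K) @ S)
     = det_cols (P @ col_range (\<lambda>k. a (m + 1) k xm x) s K @ a m (s + int K) xm x # S)"
  by (rule det_cols_shift_elimination) (rule shift_fun)

lemma pd2_casorati:
  assumes "N = Suc K"
  shows "pd2 (casorati n m) xm x = det_cols (col_range (\<lambda>k. a m k xm x) n K @ [a m (n + int N) xm x])"
proof -
  let ?cols = "col_range (\<lambda>k. a m k xm x) n N"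
  let ?new = "\<lambda>k. a m (n + int k + 1) xm x"
  have "((\<lambda>t. casorati n m xm t) has_field_derivative (\<Sum>k<N. det_cols (?cols[k := ?new k]))) (at x)"
    unfolding casorati_def col_range_def
    by (rule has_field_derivative_det_cols[where F="\<lambda>t j. a m (n + int j) xm t"]) (rule has_field_derivative_x)
  moreover have "det_cols (?cols[k := ?new k]) = 0" if "k < K" for k
  proof -
    have "?new k = ?cols ! Suc k" using that assms by (simp add: algebra_simps)
    then show ?thesis using det_cols_update_eq_nth[of "Suc k" ?cols k] that assms by simp
  qed
  ultimately have "pd2 (casorati n m) xm x = det_cols (?cols[K := ?new K])"
    unfolding pd2_def using assms by (simp add: DERIV_imp_deriv)
  also have "?cols[K := ?new K] = col_range (\<lambda>k. a m k xm x) n K @ [a m (n + int N) xm x]"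
    using assms by (simp add: col_range_Suc_snoc list_update_append algebra_simps)
  finally show ?thesis .
qed

lemma pd1_casorati:
  assumes "N = Suc K"
  shows "pd1 (casorati n m) xm x = det_cols (a m (n - 1) xm x # col_range (\<lambda>k. a m k xm x) (n + 1) K)"
proof -
  let ?cols = "col_range (\<lambda>k. a m k xm x) n N"
  let ?new = "\<lambda>k. a m (n + int k - 1) xm x"
  have "((\<lambda>s. casorati n m s x) has_field_derivative (\<Sum>k<N. det_cols (?cols[k := ?new k]))) (at xm)"
    unfolding casorati_def col_range_def
    by (rule has_field_derivative_det_cols[where F="\<lambda>s j. a m (n + int j) s x"]) (rule has_field_derivative_xm)
  moreover have "det_cols (?cols[Suc k := ?new (Suc k)]) = 0" if "k < K" for k
  proof -
    have "?new (Suc k) = ?cols ! k" using that assms by (simp add: algebra_simps)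
    then show ?thesis using det_cols_update_eq_nth[of k ?cols "Suc k"] that assms by simp
  qed
  ultimately have "pd1 (casorati n m) xm x = det_cols (?cols[0 := ?new 0])"
    unfolding pd1_def using assms by (simp add: DERIV_imp_deriv sum.lessThan_Suc_shift del: sum.lessThan_Suc)
  also have "?cols[0 := ?new 0] = a m (n - 1) xm x # col_range (\<lambda>k. a m k xm x) (n + 1) K"
    using assms by (simp add: col_range_Suc_Cons)
  finally show ?thesis .
qed

lemma pd12_casorati:
  assumes N: "N = Suc (Suc K)"
  shows "pd1 (pd2 (casorati n m)) xm x
       = det_cols (a m (n - 1) xm x # col_range (\<lambda>k. a m k xm x) (n + 1) K @ [a m (n + int N) xm x])
         + casorati n m xm x"
proof -
  define e where "e j = n + int j + (if j = Suc K then 1 else 0)" for j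
  let ?cols = "map (\<lambda>j. a m (e j) xm x) [0..<N]"
  let ?new = "\<lambda>k. a m (e k - 1) xm x"
  have pd2: "pd2 (casorati n m) s x = det_cols (map (\<lambda>j. a m (e j) s x) [0..<N])" for s
    unfolding pd2_casorati[OF N]
    by (rule arg_cong[of _ _ det_cols], rule nth_equalityI)
      (auto simp: e_def N nth_append less_Suc_eq algebra_simps)
  have "((\<lambda>s. pd2 (casorati n m) s x) has_field_derivative (\<Sum>k<N. det_cols (?cols[k := ?new k]))) (at xm)"
    unfolding pd2
    by (rule has_field_derivative_det_cols[where F="\<lambda>s j. a m (e j) s x"]) (rule has_field_derivative_xm)
  moreover have "det_cols (?cols[Suc k := ?new (Suc k)]) = 0" if "k < K" for k
  proof -
    have "?new (Suc k) = ?cols ! k" using that N by (simp add: e_def nth_append)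
    then show ?thesis using det_cols_update_eq_nth[of k ?cols "Suc k"] that N by simp
  qed
  ultimately have "pd1 (pd2 (casorati n m)) xm x
      = det_cols (?cols[0 := ?new 0]) + det_cols (?cols[Suc K := ?new (Suc K)])"
    unfolding pd1_def N using N
    by (simp add: DERIV_imp_deriv sum.lessThan_Suc_shift[of _ "Suc K"] del: sum.lessThan_Suc)
      (simp add: sum.lessThan_Suc)
  also have "?cols[0 := ?new 0]
      = a m (n - 1) xm x # col_range (\<lambda>k. a m k xm x) (n + 1) K @ [a m (n + int N) xm x]"
    by (rule nth_equalityI) (auto simp: e_def N nth_append nth_Cons' algebra_simps)
  also have "det_cols (?cols[Suc K := ?new (Suc K)]) = casorati n m xm x"
    unfolding casorati_def
    by (rule arg_cong[of _ _ det_cols], rule nth_equalityI)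
      (auto simp: e_def N nth_list_update nth_append less_Suc_eq algebra_simps)
  finally show ?thesis .
qed

lemma casorati_single_column:
  assumes "N = 1"
  shows "casorati n m xm x = a m n xm x 0"
    and "pd1 (casorati n m) xm x = a m (n - 1) xm x 0"
    and "pd2 (casorati n m) xm x = a m (n + 1) xm x 0"
    and "pd1 (pd2 (casorati n m)) xm x = a m n xm x 0"
proof -
  have pd2: "pd2 (casorati n m) s x = a m (n + 1) s x 0" for s
    using pd2_casorati[where K=0 and xm=s] assms by (simp add: det_cols_single)
  show "casorati n m xm x = a m n xm x 0"
    unfolding casorati_def using assms by (simp add: col_range_Suc_Cons det_cols_single)
  show "pd1 (casorati n m) xm x = a m (n - 1) xm x 0"
    using pd1_casorati[where K=0] assms by (simp add: det_cols_single)
  show "pd2 (casorati n m) xm x = a m (n + 1) xm x 0"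
    by (rule pd2)
  show "pd1 (pd2 (casorati n m)) xm x = a m n xm x 0"
    unfolding pd1_def pd2 using has_field_derivative_xm[where k="n + 1" and i=0] by (simp add: DERIV_imp_deriv)
qed

lemma casorati_bilinear_single_column:
  assumes "N = 1" and "c \<noteq> 0"
  shows "(1/2) * hirota12 (casorati n m) (casorati n m) xm x - casorati n m xm x * casorati n m xm x
       = - (casorati (n + 1) m xm x * casorati (n - 1) m xm x)"
    and "inverse c * hirota1 (casorati n m) (casorati n (m + 1)) xm x - casorati n m xm x * casorati n (m + 1) xm x
       + casorati (n + 1) m xm x * casorati (n - 1) (m + 1) xm x = 0"
    and "c * hirota2 (casorati (n + 1) m) (casorati n (m + 1)) xm x - casorati (n + 1) m xm x * casorati n (m + 1) xm x
       + casorati n m xm x * casorati (n + 1) (m + 1) xm x = 0"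
proof -
  have shifts: "a m (n - 1) xm x 0 = a (m + 1) (n - 1) xm x 0 + c * a m n xm x 0"
    "a m n xm x 0 = a (m + 1) n xm x 0 + c * a m (n + 1) xm x 0"
    "a m (n + 1) xm x 0 = a (m + 1) (n + 1) xm x 0 + c * a m (n + 2) xm x 0"
    using shift[of m "n - 1" xm x 0] shift[of m n xm x 0] shift[of m "n + 1" xm x 0]
    by (simp_all add: algebra_simps)
  note tau = casorati_single_column[OF assms(1)]
  show "(1/2) * hirota12 (casorati n m) (casorati n m) xm x - casorati n m xm x * casorati n m xm x
      = - (casorati (n + 1) m xm x * casorati (n - 1) m xm x)"
    by (simp add: hirota12_self tau algebra_simps)
  show "inverse c * hirota1 (casorati n m) (casorati n (m + 1)) xm x - casorati n m xm x * casorati n (m + 1) xm x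
      + casorati (n + 1) m xm x * casorati (n - 1) (m + 1) xm x = 0"
    unfolding hirota1_def tau using shifts(1,2) assms(2) by (simp add: field_simps)
  show "c * hirota2 (casorati (n + 1) m) (casorati n (m + 1)) xm x - casorati (n + 1) m xm x * casorati n (m + 1) xm x
      + casorati n m xm x * casorati (n + 1) (m + 1) xm x = 0"
    unfolding hirota2_def tau using shifts(2,3) by (simp add: algebra_simps)
qed

lemma casorati_bilinear_xm_x:
  assumes N: "N = Suc (Suc K)"
  shows "(1/2) * hirota12 (casorati n m) (casorati n m) xm x - casorati n m xm x * casorati n m xm x
       = - (casorati (n + 1) m xm x * casorati (n - 1) m xm x)"
proof -
  let ?v = "\<lambda>k. a m k xm x"
  let ?U = "col_range ?v (n + 1) K"
  have tau: "casorati n m xm x = det_cols (?v n # ?U @ [?v (n + int K + 1)])"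
    unfolding casorati_def by (simp add: N col_range_Suc_Suc)
  have pd1_tau: "pd1 (casorati n m) xm x = det_cols (?v (n - 1) # ?U @ [?v (n + int K + 1)])"
    using pd1_casorati[OF N] by (simp add: col_range_Suc_snoc algebra_simps)
  have pd2_tau: "pd2 (casorati n m) xm x = det_cols (?v n # ?U @ [?v (n + int K + 2)])"
    using pd2_casorati[OF N] by (simp add: col_range_Suc_Cons N algebra_simps)
  have pd12_tau: "pd1 (pd2 (casorati n m)) xm x
      = det_cols (?v (n - 1) # ?U @ [?v (n + int K + 2)]) + casorati n m xm x"
    using pd12_casorati[OF N] by (simp add: N algebra_simps)
  have tau_next: "casorati (n + 1) m xm x = det_cols (?U @ [?v (n + int K + 1), ?v (n + int K + 2)])"
    unfolding casorati_def by (simp add: N col_range_Suc_snoc algebra_simps)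
  have tau_prev: "casorati (n - 1) m xm x = det_cols (?v (n - 1) # ?v n # ?U)"
    unfolding casorati_def by (simp add: N col_range_Suc_Cons)
  have "(1/2) * hirota12 (casorati n m) (casorati n m) xm x - casorati n m xm x * casorati n m xm x
      = pd1 (pd2 (casorati n m)) xm x * casorati n m xm x - pd1 (casorati n m) xm x * pd2 (casorati n m) xm x
        - casorati n m xm x * casorati n m xm x"
    by (simp add: hirota12_self)
  also have "\<dots> = - (casorati (n + 1) m xm x * casorati (n - 1) m xm x)"
    using det_cols_jacobi[of "?v (n - 1)" ?U "?v (n + int K + 1)" "?v n" "?v (n + int K + 2)"]
    unfolding pd12_tau pd1_tau pd2_tau tau_next tau_prev tau by (simp add: algebra_simps)
  finally show ?thesis .
qed

lemma casorati_bilinear_xm: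
  assumes N: "N = Suc (Suc K)" and "c \<noteq> 0"
  shows "inverse c * hirota1 (casorati n m) (casorati n (m + 1)) xm x - casorati n m xm x * casorati n (m + 1) xm x
       + casorati (n + 1) m xm x * casorati (n - 1) (m + 1) xm x = 0"
proof -
  let ?v = "\<lambda>k. a m k xm x"
  let ?b = "\<lambda>k. a (m + 1) k xm x"
  let ?U = "col_range ?b (n + 1) K"
  let ?e = "n + int K + 1"
  have tau': "casorati n (m + 1) xm x = det_cols (?b n # ?U @ [?b ?e])"
    unfolding casorati_def by (simp add: N col_range_Suc_Suc)
  have pd1_tau': "pd1 (casorati n (m + 1)) xm x = det_cols (?b (n - 1) # ?U @ [?b ?e])"
    using pd1_casorati[OF N] by (simp add: col_range_Suc_snoc algebra_simps)
  have tau_prev': "casorati (n - 1) (m + 1) xm x = det_cols (?b (n - 1) # ?b n # ?U)"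
    unfolding casorati_def by (simp add: N col_range_Suc_Cons)
  have tau: "casorati n m xm x = det_cols (?b n # ?U @ [?v ?e])"
    using det_cols_eliminate_shifts[of "[]" m xm x n "Suc K" "[]"]
    unfolding casorati_def by (simp add: N col_range_Suc_Cons algebra_simps)
  have pd1_tau: "pd1 (casorati n m) xm x = det_cols (?b (n - 1) # ?U @ [?v ?e]) + c * casorati n m xm x"
  proof -
    have "pd1 (casorati n m) xm x = det_cols (?v (n - 1) # ?U @ [?v ?e])"
      using pd1_casorati[OF N] det_cols_eliminate_shifts[of "[?v (n - 1)]" m xm x "n + 1" K "[]"]
      by (simp add: algebra_simps)
    moreover have "casorati n m xm x = det_cols (?v n # ?U @ [?v ?e])"
      using det_cols_eliminate_shifts[of "[?v n]" m xm x "n + 1" K "[]"]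
      unfolding casorati_def by (simp add: N col_range_Suc_Cons algebra_simps)
    ultimately show ?thesis
      using det_cols_shift_column[of "[]" m "n - 1" xm x "?U @ [?v ?e]"] by simp
  qed
  have tau_next: "c * casorati (n + 1) m xm x = det_cols (?U @ [?b ?e, ?v ?e])"
  proof -
    have "casorati (n + 1) m xm x = det_cols (?U @ [?b ?e, ?v (?e + 1)])"
      using det_cols_eliminate_shifts[of "[]" m xm x "n + 1" "Suc K" "[]"]
      unfolding casorati_def by (simp add: N col_range_Suc_snoc algebra_simps)
    then show ?thesis
      using det_cols_shift_column[of "?U @ [?b ?e]" m ?e xm x "[]"] det_cols_repeated[of ?U "?b ?e" "[]" "[]"]
      by simp
  qed
  have "inverse c * hirota1 (casorati n m) (casorati n (m + 1)) xm x - casorati n m xm x * casorati n (m + 1) xm x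
      = inverse c * (det_cols (?b (n - 1) # ?U @ [?v ?e]) * det_cols (?b n # ?U @ [?b ?e])
          - det_cols (?b n # ?U @ [?v ?e]) * det_cols (?b (n - 1) # ?U @ [?b ?e]))"
    unfolding hirota1_def pd1_tau pd1_tau' tau' tau using assms(2) by (simp add: field_simps)
  also have "\<dots> = - inverse c * (det_cols (?b (n - 1) # ?b n # ?U) * det_cols (?U @ [?b ?e, ?v ?e]))"
    using arg_cong[OF det_cols_jacobi[of "?b (n - 1)" ?U "?b ?e" "?b n" "?v ?e"], of uminus]
    by (simp add: mult.commute)
  also have "\<dots> = - (casorati (n + 1) m xm x * casorati (n - 1) (m + 1) xm x)"
    unfolding tau_prev' tau_next[symmetric] using assms(2) by (simp add: field_simps)
  finally show ?thesis by simp
qed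

lemma casorati_bilinear_x:
  assumes N: "N = Suc (Suc K)"
  shows "c * hirota2 (casorati (n + 1) m) (casorati n (m + 1)) xm x - casorati (n + 1) m xm x * casorati n (m + 1) xm x
       + casorati n m xm x * casorati (n + 1) (m + 1) xm x = 0"
proof -
  let ?v = "\<lambda>k. a m k xm x"
  let ?b = "\<lambda>k. a (m + 1) k xm x"
  let ?U = "col_range ?b (n + 1) K"
  let ?e = "n + int K + 1"
  have tau': "casorati n (m + 1) xm x = det_cols (?b n # ?U @ [?b ?e])"
    unfolding casorati_def by (simp add: N col_range_Suc_Suc)
  have pd2_tau': "pd2 (casorati n (m + 1)) xm x = det_cols (?b n # ?U @ [?b (?e + 1)])"
    using pd2_casorati[OF N] by (simp add: col_range_Suc_Cons N algebra_simps)
  have tau_next': "casorati (n + 1) (m + 1) xm x = det_cols (?U @ [?b ?e, ?b (?e + 1)])"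
    unfolding casorati_def by (simp add: N col_range_Suc_snoc algebra_simps)
  have tau_next: "casorati (n + 1) m xm x = det_cols (?U @ [?b ?e, ?v (?e + 1)])"
    using det_cols_eliminate_shifts[of "[]" m xm x "n + 1" "Suc K" "[]"]
    unfolding casorati_def by (simp add: N col_range_Suc_snoc algebra_simps)
  have pd2_tau_next: "pd2 (casorati (n + 1) m) xm x = det_cols (?U @ [?v ?e, ?v (?e + 2)])"
    using pd2_casorati[OF N] det_cols_eliminate_shifts[of "[]" m xm x "n + 1" K "[?v (?e + 2)]"]
    by (simp add: N algebra_simps)
  have tau: "casorati n m xm x = det_cols (?b n # ?U @ [?v ?e])"
    using det_cols_eliminate_shifts[of "[]" m xm x n "Suc K" "[]"]
    unfolding casorati_def by (simp add: N col_range_Suc_Cons algebra_simps)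
  have expand:
    "det_cols (?U @ [?b ?e, ?v (?e + 1)])
       = det_cols (?U @ [?b ?e, ?b (?e + 1)]) + c * det_cols (?U @ [?b ?e, ?v (?e + 2)])"
    "det_cols (?b n # ?U @ [?v ?e])
       = det_cols (?b n # ?U @ [?b ?e]) + c * det_cols (?b n # ?U @ [?v (?e + 1)])"
    "det_cols (?b n # ?U @ [?v (?e + 1)])
       = det_cols (?b n # ?U @ [?b (?e + 1)]) + c * det_cols (?b n # ?U @ [?v (?e + 2)])"
    "det_cols (?U @ [?v ?e, ?v (?e + 2)])
       = det_cols (?U @ [?b ?e, ?v (?e + 2)]) + c * det_cols (?U @ [?v (?e + 1), ?v (?e + 2)])"
    "det_cols (?U @ [?v (?e + 1), ?v (?e + 2)]) = det_cols (?U @ [?b (?e + 1), ?v (?e + 2)])"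
    using det_cols_shift_column[of "?U @ [?b ?e]" m "?e + 1" xm x "[]"]
      det_cols_shift_column[of "?b n # ?U" m ?e xm x "[]"]
      det_cols_shift_column[of "?b n # ?U" m "?e + 1" xm x "[]"]
      det_cols_shift_column[of ?U m ?e xm x "[?v (?e + 2)]"]
      det_cols_shift_column[of ?U m "?e + 1" xm x "[?v (?e + 2)]"]
      det_cols_repeated[of ?U "?v (?e + 2)" "[]" "[]"]
    by (simp_all add: add.assoc)
  have "c * hirota2 (casorati (n + 1) m) (casorati n (m + 1)) xm x - casorati (n + 1) m xm x * casorati n (m + 1) xm x
      + casorati n m xm x * casorati (n + 1) (m + 1) xm x
      = c\<^sup>2 * (det_cols (?b n # ?U @ [?b ?e]) * det_cols (?U @ [?b (?e + 1), ?v (?e + 2)])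
          - det_cols (?b n # ?U @ [?b (?e + 1)]) * det_cols (?U @ [?b ?e, ?v (?e + 2)])
          + det_cols (?b n # ?U @ [?v (?e + 2)]) * det_cols (?U @ [?b ?e, ?b (?e + 1)]))"
    unfolding hirota2_def pd2_tau' pd2_tau_next tau' tau_next' tau_next tau expand
    by (simp add: algebra_simps power2_eq_square)
  also have "\<dots> = 0"
    using det_cols_pluecker[of "?b n" ?U "?b ?e" "?b (?e + 1)" "?v (?e + 2)"] by simp
  finally show ?thesis .
qed

theorem casorati_bilinear:
  assumes "N \<ge> 1" and "c \<noteq> 0"
  shows "(1/2) * hirota12 (casorati n m) (casorati n m) xm x - casorati n m xm x * casorati n m xm x
           = - (casorati (n + 1) m xm x * casorati (n - 1) m xm x)
    \<and> inverse c * hirota1 (casorati n m) (casorati n (m + 1)) xm x - casorati n m xm x * casorati n (m + 1) xm x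
        + casorati (n + 1) m xm x * casorati (n - 1) (m + 1) xm x = 0
    \<and> c * hirota2 (casorati (n + 1) m) (casorati n (m + 1)) xm x - casorati (n + 1) m xm x * casorati n (m + 1) xm x
        + casorati n m xm x * casorati (n + 1) (m + 1) xm x = 0"
proof -
  from assms(1) consider "N = 1" | "N = Suc (Suc (N - 2))" by arith
  then show ?thesis
  proof cases
    case 1
    then show ?thesis using casorati_bilinear_single_column[OF 1 assms(2)] by blast
  next
    case 2
    then show ?thesis
      using casorati_bilinear_xm_x[OF 2] casorati_bilinear_xm[OF 2 assms(2)] casorati_bilinear_x[OF 2] by blast
  qed
qed

end

text \<open>Rows \<open>i \<ge> N\<close> are set to zero: the dispersion relations of \<open>phi\<close> need \<open>p i, q i \<noteq> 0\<close>,
  which is only assumed for \<open>i < N\<close>, and these rows never enter an \<open>N \<times> N\<close> determinant.\<close>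

definition phi_col :: "nat \<Rightarrow> complex \<Rightarrow> (nat \<Rightarrow> complex) \<Rightarrow> (nat \<Rightarrow> complex)
    \<Rightarrow> (nat \<Rightarrow> complex) \<Rightarrow> (nat \<Rightarrow> complex) \<Rightarrow> (nat \<Rightarrow> complex) \<Rightarrow> (nat \<Rightarrow> complex)
    \<Rightarrow> int \<Rightarrow> int \<Rightarrow> complex \<Rightarrow> complex \<Rightarrow> nat \<Rightarrow> complex"
  where "phi_col N c cc dd p q xi0 eta0 m k xm x i = (if i < N then phi c cc dd p q xi0 eta0 i k m xm x else 0)"

lemma casorati_family_phi_col:
  assumes nz: "\<And>i. i < N \<Longrightarrow> p i \<noteq> 0 \<and> q i \<noteq> 0 \<and> 1 - c * p i \<noteq> 0 \<and> 1 - c * q i \<noteq> 0"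
  shows "casorati_family c (phi_col N c cc dd p q xi0 eta0)"
proof
  fix m k :: int and xm x :: complex and i :: nat
  let ?a = "phi_col N c cc dd p q xi0 eta0"
  show "((\<lambda>t. ?a m k xm t i) has_field_derivative ?a m (k + 1) xm x i) (at x)"
  proof (cases "i < N")
    case True
    with nz have "p i powi (k + 1) = p i powi k * p i" "q i powi (k + 1) = q i powi k * q i"
      by (simp_all add: power_int_add_1)
    with True show ?thesis
      unfolding phi_col_def phi_def by (auto intro!: derivative_eq_intros simp: algebra_simps)
  qed (simp add: phi_col_def)
  show "((\<lambda>s. ?a m k s x i) has_field_derivative ?a m (k - 1) xm x i) (at xm)"
  proof (cases "i < N")
    case True
    with nz have "p i powi k = p i powi (k - 1) * p i" "q i powi k = q i powi (k - 1) * q i"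
      using power_int_add_1[of "p i" "k - 1"] power_int_add_1[of "q i" "k - 1"] by simp_all
    moreover have cancel: "p i * (inverse (p i) * z) = z" "q i * (inverse (q i) * z) = z" for z
      using nz[OF True] by (simp_all add: mult.assoc[symmetric])
    ultimately show ?thesis
      using True unfolding phi_col_def phi_def by (auto intro!: derivative_eq_intros simp: algebra_simps cancel)
  qed (simp add: phi_col_def)
  show "?a m k xm x i = ?a (m + 1) k xm x i + c * ?a m (k + 1) xm x i"
  proof (cases "i < N")
    case True
    with nz have powers: "(1 - c * p i) powi (m + 1) = (1 - c * p i) powi m * (1 - c * p i)"
      "(1 - c * q i) powi (m + 1) = (1 - c * q i) powi m * (1 - c * q i)"
      "p i powi (k + 1) = p i powi k * p i" "q i powi (k + 1) = q i powi k * q i"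
      by (simp_all add: power_int_add_1)
    show ?thesis
      using True unfolding phi_col_def phi_def powers by (simp add: algebra_simps)
  qed (simp add: phi_col_def)
qed

theorem lemma1:
  fixes N :: nat and c :: complex and cc dd p q xi0 eta0 :: "nat \<Rightarrow> complex"
  assumes "N \<ge> 1" and "c \<noteq> 0"
    and "\<And>i. i < N \<Longrightarrow> p i \<noteq> 0 \<and> q i \<noteq> 0 \<and> 1 - c * p i \<noteq> 0 \<and> 1 - c * q i \<noteq> 0"
  defines "T \<equiv> tau N c cc dd p q xi0 eta0"
  shows "\<forall>(n::int) (m::int) (xm::complex) (x::complex).
      ((1/2) * hirota12 (T n m) (T n m) xm x - T n m xm x * T n m xm x
        = - (T (n+1) m xm x * T (n-1) m xm x))
    \<and> (inverse c * hirota1 (T n m) (T n (m+1)) xm x - T n m xm x * T n (m+1) xm x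
        + T (n+1) m xm x * T (n-1) (m+1) xm x = 0)
    \<and> (c * hirota2 (T (n+1) m) (T n (m+1)) xm x - T (n+1) m xm x * T n (m+1) xm x
        + T n m xm x * T (n+1) (m+1) xm x = 0)"
proof -
  interpret casorati_family N c "phi_col N c cc dd p q xi0 eta0"
    using assms(3) by (rule casorati_family_phi_col)
  have "T = casorati"
    unfolding T_def tau_def casorati_def det_cols_def
    by (intro ext arg_cong[of _ _ det] eq_matI) (auto simp: phi_col_def)
  then show ?thesis
    using casorati_bilinear[OF assms(1,2)] by blast
qed

end
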